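(* Assume $\|\hat F'(y)-\hat F'(x)\|_F\le L_{\hat F}\|y-x\|$ for all $x,y\in\mathcal F$. Let $x\in\mathcal F$, $\tau>0$, $L\ge L_{\hat F}$, and suppose $T_{L,\tau}(x)\in\mathcal F$. Then $$\frac\tau2+\frac{\hat f_2(x)}{2\tau}-\hat f_1(T_{L,\tau}(x))\ge\frac L2\|T_{L,\tau}(x)-x\|^2.$$
   Context: Let $F:\mathbb R^n\to\mathbb R^m$ be smooth, $\hat F=\frac1{\sqrt m}F$ with Jacobian $\hat F'(x)$; Euclidean norms, $\|\cdot\|_F$ Frobenius norm; $\mathcal F\subseteq\mathbb R^n$ closed convex with nonempty interior. $\hat f_1(x)=\|\hat F(x)\|$, $\hat f_2=\hat f_1^2$, $\psi_{x,L,\tau}(y)=\frac\tau2+\frac1{2\tau}\|\hat F(x)+\hat F'(x)(y-x)\|^2+\frac L2\|y-x\|^2$, and $T_{L,\tau}(x)=\arg\min_{y\in\mathbb R^n}\psi_{x,L,\tau}(y)$. *)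

theory Defs
  imports "HOL-Analysis.Analysis"
begin

definition Fhat :: "(real^'n \<Rightarrow> real^'m) \<Rightarrow> real^'n \<Rightarrow> real^'m" where
  "Fhat F x = (1 / sqrt (real CARD('m))) *\<^sub>R F x"

text \<open>Scaled Jacobian: Fhat' = F' / sqrt m (J x is the m x n Jacobian matrix of F at x).\<close>
definition Fhat' :: "(real^'n \<Rightarrow> real^'n^'m) \<Rightarrow> real^'n \<Rightarrow> real^'n^'m" where
  "Fhat' J x = (1 / sqrt (real CARD('m))) *\<^sub>R J x"

definition frob_norm :: "real^'n^'m \<Rightarrow> real" where
  "frob_norm A = sqrt (\<Sum>i\<in>UNIV. \<Sum>j\<in>UNIV. (A $ i $ j)\<^sup>2)"

definition fhat1 :: "(real^'n \<Rightarrow> real^'m) \<Rightarrow> real^'n \<Rightarrow> real" where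
  "fhat1 F x = norm (Fhat F x)"

definition fhat2 :: "(real^'n \<Rightarrow> real^'m) \<Rightarrow> real^'n \<Rightarrow> real" where
  "fhat2 F x = (fhat1 F x)\<^sup>2"

definition psi :: "(real^'n \<Rightarrow> real^'m) \<Rightarrow> (real^'n \<Rightarrow> real^'n^'m)
    \<Rightarrow> real^'n \<Rightarrow> real \<Rightarrow> real \<Rightarrow> real^'n \<Rightarrow> real" where
  "psi F J x L \<tau> y = \<tau> / 2 + (1 / (2 * \<tau>)) * (norm (Fhat F x + Fhat' J x *v (y - x)))\<^sup>2
                     + (L / 2) * (norm (y - x))\<^sup>2"

definition T_argmin :: "(real^'n \<Rightarrow> real^'m) \<Rightarrow> (real^'n \<Rightarrow> real^'n^'m)
    \<Rightarrow> real \<Rightarrow> real \<Rightarrow> real^'n \<Rightarrow> (real^'n) set" where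
  "T_argmin F J L \<tau> x = {y. \<forall>z. psi F J x L \<tau> y \<le> psi F J x L \<tau> z}"

end

theory Submission
  imports Defs
begin

text \<open>
  Along any line, \<open>\<psi>\<^sub>x\<^sub>,\<^sub>L\<^sub>,\<^sub>\<tau>\<close> is a quadratic polynomial whose leading coefficient is at
  least \<open>L/2\<close> times the squared length of the direction. At the minimiser \<open>T\<close> the linear
  coefficient vanishes, so \<open>\<psi>(x) - \<psi>(T) \<ge> L/2 \<parallel>T - x\<parallel>\<^sup>2\<close>, while \<open>\<psi>(x) = \<tau>/2 + f\<^sub>2(x)/(2\<tau>)\<close>.
  On the other hand \<open>\<psi>\<close> majorises \<open>f\<^sub>1\<close> on \<open>\<F>\<close>: the Lipschitz bound on the Jacobian
  bounds the linearisation error of \<open>F\<close> at \<open>y\<close> by \<open>L/2 \<parallel>y - x\<parallel>\<^sup>2\<close>, and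
  \<open>\<parallel>r\<parallel> \<le> \<tau>/2 + \<parallel>r\<parallel>\<^sup>2/(2\<tau>)\<close>.
\<close>

lemma power2_norm_vec: "(norm (x :: real^'n))\<^sup>2 = (\<Sum>i\<in>UNIV. (x $ i)\<^sup>2)"
  by (simp add: norm_vec_def L2_set_def sum_nonneg)

lemma power2_norm_add_scaleR:
  fixes p q :: "'a::real_inner"
  shows "(norm (p + t *\<^sub>R q))\<^sup>2 = (norm p)\<^sup>2 + 2 * t * (p \<bullet> q) + t\<^sup>2 * (norm q)\<^sup>2"
  using dot_norm[of p "t *\<^sub>R q"] by (simp add: power_mult_distrib)

lemma linear_coeff_eq_0_if_quadratic_nonneg:
  fixes b c :: real
  assumes "\<And>t. 0 \<le> b * t + c * t\<^sup>2"
  shows "b = 0"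
proof (rule ccontr)
  assume "b \<noteq> 0"
  define k where "k = \<bar>c\<bar> + 1"
  have "k > 0" "c - k < 0"
    by (auto simp: k_def)
  have "b * (- b / k) + c * (- b / k)\<^sup>2 = b\<^sup>2 * (c - k) / k\<^sup>2"
    using \<open>k > 0\<close> by (simp add: field_simps power2_eq_square)
  also have "\<dots> < 0"
    using \<open>b \<noteq> 0\<close> \<open>k > 0\<close> \<open>c - k < 0\<close> by (simp add: divide_neg_pos mult_pos_neg)
  finally show False
    using assms[of "- b / k"] by simp
qed

lemma frob_norm_nonneg: "0 \<le> frob_norm A"
  by (simp add: frob_norm_def sum_nonneg)

lemma norm_matrix_vector_mult_le_frob_norm:
  fixes A :: "real^'n^'m"
  shows "norm (A *v v) \<le> frob_norm A * norm v"
proof -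
  have "(norm (A *v v))\<^sup>2 = (\<Sum>i\<in>UNIV. (A $ i \<bullet> v)\<^sup>2)"
    by (simp add: power2_norm_vec matrix_vector_mult_def inner_vec_def)
  also have "\<dots> \<le> (\<Sum>i\<in>UNIV. (norm (A $ i))\<^sup>2 * (norm v)\<^sup>2)"
  proof (rule sum_mono)
    fix i
    have "\<bar>A $ i \<bullet> v\<bar> \<le> norm (A $ i) * norm v"
      by (rule Cauchy_Schwarz_ineq2)
    then show "(A $ i \<bullet> v)\<^sup>2 \<le> (norm (A $ i))\<^sup>2 * (norm v)\<^sup>2"
      by (metis abs_ge_zero power2_abs power_mono power_mult_distrib)
  qed
  also have "\<dots> = (frob_norm A * norm v)\<^sup>2"
    by (simp add: frob_norm_def power_mult_distrib power2_norm_vec sum_distrib_right sum_nonneg)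
  finally show ?thesis
    by (rule power2_le_imp_le) (simp add: frob_norm_nonneg)
qed

lemma has_real_derivative_inner_line:
  fixes G :: "real^'n \<Rightarrow> real^'m" and A :: "real^'n^'m"
  assumes "(G has_derivative (\<lambda>h. A *v h)) (at (x + t *\<^sub>R d))"
  shows "((\<lambda>s. u \<bullet> G (x + s *\<^sub>R d)) has_real_derivative u \<bullet> (A *v d)) (at t)"
proof -
  have "((\<lambda>s. x + s *\<^sub>R d) has_derivative (\<lambda>h. h *\<^sub>R d)) (at t)"
    by (auto intro!: derivative_eq_intros)
  from has_derivative_compose[OF this assms]
  have "((\<lambda>s. u \<bullet> G (x + s *\<^sub>R d)) has_derivative (\<lambda>h. u \<bullet> (A *v (h *\<^sub>R d)))) (at t)"
    by (intro has_derivative_inner_right) (simp add: o_def)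
  moreover have "(\<lambda>h. u \<bullet> (A *v (h *\<^sub>R d))) = (*) (u \<bullet> (A *v d))"
    by (simp add: fun_eq_iff matrix_vector_mult_scaleR)
  ultimately show ?thesis
    by (simp add: has_field_derivative_def)
qed

lemma linearization_error_le:
  fixes G :: "real^'n \<Rightarrow> real^'m" and A :: "real^'n \<Rightarrow> real^'n^'m"
  assumes deriv: "\<And>z. z \<in> S \<Longrightarrow> (G has_derivative (\<lambda>h. A z *v h)) (at z)"
    and "convex S"
    and lip: "\<And>y z. y \<in> S \<Longrightarrow> z \<in> S \<Longrightarrow> frob_norm (A z - A y) \<le> K * norm (z - y)"
    and x: "x \<in> S" and y: "y \<in> S"
  shows "norm (G y - G x - A x *v (y - x)) \<le> K / 2 * (norm (y - x))\<^sup>2"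
proof -
  define d where "d = y - x"
  define e where "e = G y - G x - A x *v d"
  define u where "u = (1 / norm e) *\<^sub>R e"
  have ue: "u \<bullet> e = norm e"
    by (cases "e = 0") (simp_all add: u_def power2_norm_eq_inner[symmetric] power2_eq_square)
  have "norm u \<le> 1"
    by (cases "e = 0") (simp_all add: u_def)
  then have inner_u_le: "u \<bullet> w \<le> norm w" for w
    using norm_cauchy_schwarz[of u w] mult_left_le_one_le[OF norm_ge_zero norm_ge_zero]
    by (meson order_trans)
  have line: "x + t *\<^sub>R d \<in> S" if "0 \<le> t" "t \<le> 1" for t
  proof -
    have "(1 - t) *\<^sub>R x + t *\<^sub>R y \<in> S"
      using convexD_alt[OF \<open>convex S\<close> x y] that by simp
    then show ?thesis
      by (simp add: d_def algebra_simps)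
  qed
  \<comment> \<open>\<open>\<phi>\<close> is built so that \<open>\<phi>' \<le> 0\<close>; the mean value theorem then bounds \<open>u \<bullet> e = \<phi>(1) - \<phi>(0) + K/2 \<parallel>d\<parallel>\<^sup>2\<close>.\<close>
  define \<phi> where "\<phi> t = u \<bullet> G (x + t *\<^sub>R d) - t * (u \<bullet> (A x *v d)) - K / 2 * t\<^sup>2 * (norm d)\<^sup>2" for t
  define \<phi>' where "\<phi>' t = u \<bullet> (A (x + t *\<^sub>R d) *v d) - u \<bullet> (A x *v d) - K * t * (norm d)\<^sup>2" for t
  have "DERIV \<phi> t :> \<phi>' t" if "0 \<le> t" "t \<le> 1" for t
    unfolding \<phi>_def[abs_def] \<phi>'_def
    by (rule has_real_derivative_inner_line[OF deriv[OF line[OF that]]] derivative_eq_intros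
        | simp)+
  then obtain z where z: "0 < z" "z < 1" and mvt: "\<phi> 1 - \<phi> 0 = \<phi>' z"
    using MVT2[of 0 1 \<phi> \<phi>'] by auto
  have "\<phi>' z = u \<bullet> ((A (x + z *\<^sub>R d) - A x) *v d) - K * z * (norm d)\<^sup>2"
    by (simp add: \<phi>'_def matrix_vector_mult_diff_rdistrib inner_diff_right)
  also have "\<dots> \<le> norm ((A (x + z *\<^sub>R d) - A x) *v d) - K * z * (norm d)\<^sup>2"
    using inner_u_le by (rule diff_right_mono)
  also have "\<dots> \<le> frob_norm (A (x + z *\<^sub>R d) - A x) * norm d - K * z * (norm d)\<^sup>2"
    using norm_matrix_vector_mult_le_frob_norm by simp
  also have "\<dots> \<le> K * norm (z *\<^sub>R d) * norm d - K * z * (norm d)\<^sup>2"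
    using lip[OF x line] z by (simp add: mult_right_mono)
  also have "\<dots> = 0"
    using z by (simp add: power2_eq_square)
  finally have "u \<bullet> e \<le> K / 2 * (norm d)\<^sup>2"
    using mvt by (simp add: \<phi>_def e_def d_def inner_diff_right)
  then show ?thesis
    unfolding ue unfolding e_def d_def .
qed

lemma has_derivative_Fhat:
  fixes F :: "real^'n \<Rightarrow> real^'m" and J :: "real^'n \<Rightarrow> real^'n^'m"
  assumes "(F has_derivative (\<lambda>h. J z *v h)) (at z)"
  shows "(Fhat F has_derivative (\<lambda>h. Fhat' J z *v h)) (at z)"
proof -
  have "((\<lambda>y. (1 / sqrt (real CARD('m))) *\<^sub>R F y) has_derivative
      (\<lambda>h. (1 / sqrt (real CARD('m))) *\<^sub>R (J z *v h))) (at z)"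
    using assms by (intro derivative_intros)
  then show ?thesis
    unfolding Fhat_def[abs_def] Fhat'_def by (simp add: scaleR_matrix_vector_assoc)
qed

lemma fhat1_le_psi:
  fixes F :: "real^'n \<Rightarrow> real^'m" and J :: "real^'n \<Rightarrow> real^'n^'m"
  assumes deriv: "\<And>z. (F has_derivative (\<lambda>h. J z *v h)) (at z)"
    and "convex S"
    and lip: "\<And>x y. x \<in> S \<Longrightarrow> y \<in> S \<Longrightarrow> frob_norm (Fhat' J y - Fhat' J x) \<le> LF * norm (y - x)"
    and "x \<in> S" "y \<in> S" "\<tau> > 0" "LF \<le> L"
  shows "fhat1 F y \<le> psi F J x L \<tau> y"
proof -
  define r where "r = Fhat F x + Fhat' J x *v (y - x)"
  have "norm (Fhat F y - r) \<le> LF / 2 * (norm (y - x))\<^sup>2"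
    using linearization_error_le[OF has_derivative_Fhat[OF deriv] \<open>convex S\<close> lip \<open>x \<in> S\<close> \<open>y \<in> S\<close>]
    by (simp add: r_def diff_diff_eq)
  also have "\<dots> \<le> L / 2 * (norm (y - x))\<^sup>2"
    using \<open>LF \<le> L\<close> by (simp add: mult_right_mono)
  finally have linearization: "norm (Fhat F y - r) \<le> L / 2 * (norm (y - x))\<^sup>2" .
  have am_gm: "norm r \<le> \<tau> / 2 + (norm r)\<^sup>2 / (2 * \<tau>)"
  proof -
    have "0 \<le> (\<tau> - norm r)\<^sup>2 / (2 * \<tau>)"
      using \<open>\<tau> > 0\<close> by simp
    also have "\<dots> = \<tau> / 2 + (norm r)\<^sup>2 / (2 * \<tau>) - norm r"
      using \<open>\<tau> > 0\<close> by (simp add: field_simps power2_eq_square)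
    finally show ?thesis by simp
  qed
  have "fhat1 F y \<le> norm r + norm (Fhat F y - r)"
    unfolding fhat1_def by (rule norm_triangle_sub)
  also have "\<dots> \<le> psi F J x L \<tau> y"
    using linearization am_gm by (simp add: psi_def r_def)
  finally show ?thesis .
qed

lemma psi_along_line:
  fixes F :: "real^'n \<Rightarrow> real^'m" and J :: "real^'n \<Rightarrow> real^'n^'m"
    and x y d :: "real^'n" and L \<tau> t :: real
  defines "r \<equiv> Fhat F x + Fhat' J x *v (y - x)" and "Ad \<equiv> Fhat' J x *v d"
  shows "psi F J x L \<tau> (y + t *\<^sub>R d) = psi F J x L \<tau> y
           + (r \<bullet> Ad / \<tau> + L * ((y - x) \<bullet> d)) * t + ((norm Ad)\<^sup>2 / (2 * \<tau>) + L / 2 * (norm d)\<^sup>2) * t\<^sup>2"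
proof -
  have lin: "Fhat F x + Fhat' J x *v ((y - x) + t *\<^sub>R d) = r + t *\<^sub>R Ad"
    by (simp add: r_def Ad_def matrix_vector_right_distrib matrix_vector_mult_scaleR algebra_simps)
  have dist: "y + t *\<^sub>R d - x = (y - x) + t *\<^sub>R d"
    by simp
  have collect: "c0 + c1 * (R + 2 * t * a + t\<^sup>2 * P) + c2 * (W + 2 * t * w + t\<^sup>2 * D)
    = c0 + c1 * R + c2 * W + (2 * c1 * a + 2 * c2 * w) * t + (c1 * P + c2 * D) * t\<^sup>2"
    for c0 c1 c2 R a P W w D :: real
    \<comment> \<open>abstract coefficients, since \<open>algebra_simps\<close> fails to finish on the version with divisions by \<open>\<tau>\<close>\<close>
    by (simp add: algebra_simps)
  show ?thesis
    unfolding psi_def lin dist r_def[symmetric] power2_norm_add_scaleR collect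
    by simp
qed

lemma psi_quadratic_growth_at_T_argmin:
  assumes "\<tau> > 0" "T \<in> T_argmin F J L \<tau> x"
  shows "psi F J x L \<tau> T + L / 2 * (norm (y - T))\<^sup>2 \<le> psi F J x L \<tau> y"
proof -
  define d where "d = y - T"
  define b where "b = (Fhat F x + Fhat' J x *v (T - x)) \<bullet> (Fhat' J x *v d) / \<tau> + L * ((T - x) \<bullet> d)"
  define c where "c = (norm (Fhat' J x *v d))\<^sup>2 / (2 * \<tau>) + L / 2 * (norm d)\<^sup>2"
  have along_line: "psi F J x L \<tau> (T + t *\<^sub>R d) = psi F J x L \<tau> T + b * t + c * t\<^sup>2" for t
    unfolding b_def c_def by (rule psi_along_line)
  have "b = 0"
  proof (rule linear_coeff_eq_0_if_quadratic_nonneg)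
    fix t
    have "psi F J x L \<tau> T \<le> psi F J x L \<tau> (T + t *\<^sub>R d)"
      using \<open>T \<in> T_argmin F J L \<tau> x\<close> by (simp add: T_argmin_def)
    then show "0 \<le> b * t + c * t\<^sup>2"
      using along_line[of t] by simp
  qed
  then have "psi F J x L \<tau> y = psi F J x L \<tau> T + c"
    using along_line[of 1] by (simp add: d_def)
  moreover have "L / 2 * (norm (y - T))\<^sup>2 \<le> c"
    using \<open>\<tau> > 0\<close> by (simp add: c_def d_def)
  ultimately show ?thesis
    by simp
qed

theorem lemma2:
  fixes F :: "real^'n \<Rightarrow> real^'m"
    and J :: "real^'n \<Rightarrow> real^'n^'m"
    and \<F> :: "(real^'n) set"
    and LF L \<tau> :: real
    and x T :: "real^'n"
  assumes deriv: "\<And>z. (F has_derivative (\<lambda>h. J z *v h)) (at z)"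
    and F_closed: "closed \<F>" and F_convex: "convex \<F>" and F_int: "interior \<F> \<noteq> {}"
    and lip: "\<And>x y. x \<in> \<F> \<Longrightarrow> y \<in> \<F> \<Longrightarrow>
                frob_norm (Fhat' J y - Fhat' J x) \<le> LF * norm (y - x)"
    and x_in: "x \<in> \<F>"
    and tau_pos: "\<tau> > 0"
    and L_ge: "L \<ge> LF"
    and T_min: "T \<in> T_argmin F J L \<tau> x"
    and T_in: "T \<in> \<F>"
  shows "\<tau> / 2 + fhat2 F x / (2 * \<tau>) - fhat1 F T \<ge> (L / 2) * (norm (T - x))\<^sup>2"
proof -
  have "fhat1 F T + L / 2 * (norm (x - T))\<^sup>2 \<le> psi F J x L \<tau> T + L / 2 * (norm (x - T))\<^sup>2"
    using fhat1_le_psi[OF deriv F_convex lip x_in T_in tau_pos L_ge] by simp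
  also have "\<dots> \<le> psi F J x L \<tau> x"
    by (rule psi_quadratic_growth_at_T_argmin[OF tau_pos T_min])
  also have "\<dots> = \<tau> / 2 + fhat2 F x / (2 * \<tau>)"
    by (simp add: psi_def fhat2_def fhat1_def)
  finally show ?thesis
    by (simp add: norm_minus_commute)
qed

end
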